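(* Let $L=E\cup F\Sigma^*$, where $E,F\subseteq\Sigma^*$ are finite, be a reverse definite language with state complexity $n\ge 1$. Then $\sigma(L)\le (n-1)!$, and this bound is tight (for every $n\ge1$ there is a reverse definite language with state complexity $n$ and syntactic complexity $(n-1)!$). Moreover, if $L$ achieves this upper bound, i.e. $\sigma(L)=(n-1)!$, and $n\ge 4$, then $|\Sigma|\ge (n-1)!-2(n-2)!$, and this bound is tight (for every $n\ge 4$ there is a reverse definite language over an alphabet of size exactly $(n-1)!-2(n-2)!$ with state complexity $n$ and syntactic complexity $(n-1)!$).
   Context: $\Sigma$ is a finite non-empty alphabet. A language $L\subseteq\Sigma^*$ is reverse definite if $L=E\cup F\Sigma^*$ for some finite languages $E,F\subseteq\Sigma^*$. The state complexity of a regular language is the number of states of its minimal deterministic finite automaton (DFA). The syntactic congruence of $L$ is $x\approx_L y$ iff for all $u,v\in\Sigma^*$, $uxv\in L\Leftrightarrow uyv\in L$; the syntactic semigroup is $\Sigma^+/\approx_L$, and the syntactic complexity $\sigma(L)$ is its cardinality (equivalently, the number of distinct transformations of the states of the minimal DFA of $L$ induced by non-empty words). *)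

theory Defs
  imports Main
begin

definition reverse_definite :: "'a set \<Rightarrow> 'a list set \<Rightarrow> bool" where
  "reverse_definite \<Sigma> L \<longleftrightarrow>
     (\<exists>E F. finite E \<and> finite F \<and> E \<subseteq> lists \<Sigma> \<and> F \<subseteq> lists \<Sigma> \<and>
        L = E \<union> {f @ w | f w. f \<in> F \<and> w \<in> lists \<Sigma>})"

definition is_dfa :: "'a set \<Rightarrow> 's set \<Rightarrow> ('s \<Rightarrow> 'a \<Rightarrow> 's) \<Rightarrow> 's \<Rightarrow> 's set \<Rightarrow> bool" where
  "is_dfa \<Sigma> Q \<delta> q0 Fs \<longleftrightarrow>
     finite Q \<and> q0 \<in> Q \<and> Fs \<subseteq> Q \<and> (\<forall>q\<in>Q. \<forall>a\<in>\<Sigma>. \<delta> q a \<in> Q)"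

definition dfa_lang :: "'a set \<Rightarrow> ('s \<Rightarrow> 'a \<Rightarrow> 's) \<Rightarrow> 's \<Rightarrow> 's set \<Rightarrow> 'a list set" where
  "dfa_lang \<Sigma> \<delta> q0 Fs = {w \<in> lists \<Sigma>. fold (\<lambda>a q. \<delta> q a) w q0 \<in> Fs}"

text \<open>State complexity: number of states of a minimal DFA recognising \<open>L\<close>
  (states can w.l.o.g. be taken to be natural numbers).\<close>

definition state_complexity :: "'a set \<Rightarrow> 'a list set \<Rightarrow> nat" where
  "state_complexity \<Sigma> L =
     (LEAST n. \<exists>(Q::nat set) \<delta> q0 Fs. is_dfa \<Sigma> Q \<delta> q0 Fs \<and> card Q = n \<and> dfa_lang \<Sigma> \<delta> q0 Fs = L)"

definition syntactic_cong :: "'a set \<Rightarrow> 'a list set \<Rightarrow> ('a list \<times> 'a list) set" where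
  "syntactic_cong \<Sigma> L =
     {(x, y). x \<in> lists \<Sigma> \<and> y \<in> lists \<Sigma> \<and>
        (\<forall>u\<in>lists \<Sigma>. \<forall>v\<in>lists \<Sigma>. u @ x @ v \<in> L \<longleftrightarrow> u @ y @ v \<in> L)}"

definition syntactic_complexity :: "'a set \<Rightarrow> 'a list set \<Rightarrow> nat" where
  "syntactic_complexity \<Sigma> L = card ((lists \<Sigma> - {[]}) // syntactic_cong \<Sigma> L)"

end

theory Submission
  imports Defs "HOL-Library.FuncSet"
begin

text \<open>The states of the minimal DFA of \<open>L\<close> are its left quotients. If \<open>L = E \<union> F\<Sigma>\<^sup>*\<close>, every
  word longer than all words of \<open>E \<union> F\<close> leads to one of the sink quotients \<open>{}\<close> and \<open>\<Sigma>\<^sup>*\<close>, so every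
  other quotient can be ranked by the length of the longest word leading to it, and a non-empty
  word moves each non-sink quotient into a sink or to a quotient of higher rank. A non-sink of
  least rank is hit by no such transformation, which by induction leaves at most \<open>(n - 1)!\<close> of
  them, and at most \<open>2 (n - 2)!\<close> products of two of them. When \<open>\<sigma>(L) = (n - 1)!\<close>, every such
  transformation is induced by a word, and those not induced by a letter are products of two,
  whence \<open>|\<Sigma>| \<ge> (n - 1)! - 2 (n - 2)!\<close>. Both bounds are attained by the automaton on
  \<open>{0..<n}\<close> with sinks \<open>n - 2\<close> and \<open>n - 1\<close> whose letters are all maps sending each other state
  to a larger one, or only those of them that are not products of two others.\<close>

section \<open>Transformations increasing a rank\<close>

text \<open>\<open>S\<close> will be the set of sink quotients and \<open>r\<close> a rank of the other quotients.\<close>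

definition rank_increasing :: "'q set \<Rightarrow> 'q set \<Rightarrow> ('q \<Rightarrow> nat) \<Rightarrow> ('q \<Rightarrow> 'q) set" where
  "rank_increasing P S r =
     {t \<in> P \<rightarrow>\<^sub>E P. \<forall>x\<in>P. (x \<in> S \<longrightarrow> t x = x) \<and> (x \<notin> S \<longrightarrow> t x \<in> S \<or> r x < r (t x))}"

definition products :: "'q set \<Rightarrow> ('q \<Rightarrow> 'q) set \<Rightarrow> ('q \<Rightarrow> 'q) set" where
  "products P A = {restrict (t2 \<circ> t1) P | t1 t2. t1 \<in> A \<and> t2 \<in> A}"

lemma restrict_comp_in_products: "t1 \<in> A \<Longrightarrow> t2 \<in> A \<Longrightarrow> restrict (t2 \<circ> t1) P \<in> products P A"
  by (auto simp: products_def)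

lemma rank_increasing_not_min:
  assumes "m \<in> P - S" "\<forall>x\<in>P - S. r m \<le> r x" "t \<in> rank_increasing P S r" "x \<in> P"
  shows "t x \<noteq> m"
proof
  assume tx: "t x = m"
  show False
  proof (cases "x \<in> S")
    case True
    with assms tx show False by (auto simp: rank_increasing_def)
  next
    case False
    with assms have "t x \<in> S \<or> r x < r (t x)" "r m \<le> r x"
      by (auto simp: rank_increasing_def)
    with tx assms(1) show False by auto
  qed
qed

lemma finite_rank_increasing: "finite P \<Longrightarrow> finite (rank_increasing P S r)"
  by (rule finite_subset[of _ "P \<rightarrow>\<^sub>E P"]) (auto simp: rank_increasing_def intro: finite_PiE)

lemma products_subset_PiE: "A \<subseteq> P \<rightarrow>\<^sub>E P \<Longrightarrow> products P A \<subseteq> P \<rightarrow>\<^sub>E P"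
  by (auto simp: products_def) (meson PiE_mem subsetD)

lemma rank_increasing_subset_PiE: "rank_increasing P S r \<subseteq> P \<rightarrow>\<^sub>E P"
  by (auto simp: rank_increasing_def)

lemma finite_products_rank_increasing: "finite P \<Longrightarrow> finite (products P (rank_increasing P S r))"
  using products_subset_PiE[OF rank_increasing_subset_PiE] by (rule finite_subset) (rule finite_PiE)

lemma card_rank_increasing_all_sinks:
  assumes "P \<subseteq> S"
  shows "card (rank_increasing P S r) \<le> 1"
proof -
  have "rank_increasing P S r \<subseteq> {restrict id P}"
    using assms by (auto simp: rank_increasing_def PiE_iff extensional_def fun_eq_iff subset_iff)
  then show ?thesis using card_mono[of "{restrict id P}"] by fastforce
qed

lemma card_products_all_sinks:
  assumes "P \<subseteq> S"
  shows "card (products P (rank_increasing P S r)) \<le> 1"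
proof -
  have "products P (rank_increasing P S r) \<subseteq> {restrict id P}"
    using assms by (auto simp: products_def rank_increasing_def fun_eq_iff subset_iff)
  then show ?thesis using card_mono[of "{restrict id P}"] by fastforce
qed

lemma restrict_rank_increasing:
  assumes "m \<in> P - S" "\<forall>x\<in>P - S. r m \<le> r x" "t \<in> rank_increasing P S r"
  shows "restrict t (P - {m}) \<in> rank_increasing (P - {m}) S r"
  using rank_increasing_not_min[OF assms] assms(3) by (auto simp: rank_increasing_def PiE_iff)

lemma restrict_products_rank_increasing:
  assumes m: "m \<in> P - S" "\<forall>x\<in>P - S. r m \<le> r x" and s: "s \<in> products P (rank_increasing P S r)"
  shows "restrict s (P - {m}) \<in> products (P - {m}) (rank_increasing (P - {m}) S r)"
    and "s m \<in> P - {m}"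
    and "\<And>m'. m' \<in> P - {m} - S \<Longrightarrow> \<forall>x\<in>P - {m} - S. r m' \<le> r x \<Longrightarrow> s m \<noteq> m'"
proof -
  obtain t1 t2 where t: "t1 \<in> rank_increasing P S r" "t2 \<in> rank_increasing P S r"
    and s_eq: "s = restrict (t2 \<circ> t1) P"
    using s by (auto simp: products_def)
  have t1_avoids: "t1 x \<in> P - {m}" if "x \<in> P" for x
    using rank_increasing_not_min[OF m t(1) that] t(1) that by (auto simp: rank_increasing_def)
  have r2: "restrict t2 (P - {m}) \<in> rank_increasing (P - {m}) S r"
    using restrict_rank_increasing[OF m t(2)] .
  have "restrict s (P - {m}) =
        restrict (restrict t2 (P - {m}) \<circ> restrict t1 (P - {m})) (P - {m})"
    using t1_avoids by (auto simp: s_eq fun_eq_iff)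
  then show "restrict s (P - {m}) \<in> products (P - {m}) (rank_increasing (P - {m}) S r)"
    using restrict_rank_increasing[OF m t(1)] r2 unfolding products_def by blast
  have "t1 m \<in> P - {m}" using t1_avoids m by blast
  then show "s m \<in> P - {m}"
    using rank_increasing_not_min[OF m t(2)] t(2) m s_eq by (auto simp: rank_increasing_def)
  fix m' assume "m' \<in> P - {m} - S" "\<forall>x\<in>P - {m} - S. r m' \<le> r x"
  then have "restrict t2 (P - {m}) (t1 m) \<noteq> m'"
    using rank_increasing_not_min[OF _ _ r2 \<open>t1 m \<in> P - {m}\<close>] by blast
  then show "s m \<noteq> m'"
    using s_eq m \<open>t1 m \<in> P - {m}\<close> by simp
qed

lemma card_le_mult_card_restrict:
  assumes "m \<in> P" "A \<subseteq> P \<rightarrow>\<^sub>E P" "finite B" "finite C"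
    and "\<And>t. t \<in> A \<Longrightarrow> t m \<in> B" "\<And>t. t \<in> A \<Longrightarrow> restrict t (P - {m}) \<in> C"
  shows "card A \<le> card B * card C"
proof -
  have "inj_on (\<lambda>t. (t m, restrict t (P - {m}))) A"
  proof (rule inj_onI)
    fix t t' assume "t \<in> A" "t' \<in> A" and eq: "(t m, restrict t (P - {m})) = (t' m, restrict t' (P - {m}))"
    then have "t \<in> P \<rightarrow>\<^sub>E P" "t' \<in> P \<rightarrow>\<^sub>E P" using assms(2) by auto
    with eq assms(1) show "t = t'"
      by (auto simp: fun_eq_iff PiE_iff extensional_def restrict_def split: if_splits) metis
  qed
  then have "card A \<le> card (B \<times> C)"
    by (rule card_inj_on_le) (use assms in auto)
  then show ?thesis by (simp add: card_cartesian_product)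
qed

lemma obtain_min_rank:
  assumes "\<not> P \<subseteq> S"
  obtains m where "m \<in> P - S" "\<forall>x\<in>P - S. (r::'q \<Rightarrow> nat) m \<le> r x"
  using assms ex_has_least_nat[of "\<lambda>x. x \<in> P - S" _ r] by blast

lemma mult_fact_pred_le: "k * fact (k - 1) \<le> (fact k :: nat)"
  by (cases k) auto

lemma card_rank_increasing_le:
  assumes "finite P"
  shows "card (rank_increasing P S r) \<le> fact (card P - 1)"
  using assms
proof (induction "card P" arbitrary: P)
  case (Suc n)
  show ?case
  proof (cases "P \<subseteq> S")
    case True
    then show ?thesis using card_rank_increasing_all_sinks fact_ge_1 order_trans by blast
  next
    case False
    then obtain m where m: "m \<in> P - S" "\<forall>x\<in>P - S. r m \<le> r x"
      by (rule obtain_min_rank)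
    have P': "finite (P - {m})" "card (P - {m}) = n" using Suc m by auto
    have "card (rank_increasing P S r) \<le> card (P - {m}) * card (rank_increasing (P - {m}) S r)"
      using m P' rank_increasing_not_min[OF m] restrict_rank_increasing[OF m]
      by (intro card_le_mult_card_restrict rank_increasing_subset_PiE finite_rank_increasing)
        (auto simp: rank_increasing_def)
    also have "\<dots> \<le> n * fact (n - 1)"
      using Suc.hyps(1)[OF P'(2)[symmetric] P'(1)] P' by simp
    also have "\<dots> \<le> fact n" by (rule mult_fact_pred_le)
    finally show ?thesis by (simp flip: Suc.hyps(2))
  qed
qed (use card_rank_increasing_all_sinks[of "{}"] in simp)

text \<open>A product \<open>t\<^sub>2 \<circ> t\<^sub>1\<close> avoids the two non-sinks of least rank when applied to the
  non-sink \<open>m\<close> of least rank, which leaves \<open>card P - 2\<close> values for it.\<close>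

lemma card_products_rank_increasing_le:
  assumes "finite P"
  shows "card (products P (rank_increasing P S r)) \<le> 2 * fact (card P - 2)"
  using assms
proof (induction "card P" arbitrary: P)
  case (Suc n)
  show ?case
  proof (cases "P \<subseteq> S")
    case True
    then show ?thesis
      using card_products_all_sinks[OF True, of r] fact_ge_1[of "card P - 2", where 'a=nat] by linarith
  next
    case False
    then obtain m where m: "m \<in> P - S" "\<forall>x\<in>P - S. r m \<le> r x"
      by (rule obtain_min_rank)
    let ?P = "P - {m}"
    have P': "finite ?P" "card ?P = n" using Suc m by auto
    note restrict = restrict_products_rank_increasing[OF m]
    have split: "card (products P (rank_increasing P S r))
        \<le> card B * card (products ?P (rank_increasing ?P S r))"
      if "finite B" "\<And>s. s \<in> products P (rank_increasing P S r) \<Longrightarrow> s m \<in> B" for B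
      using m restrict(1) that(2)
      by (intro card_le_mult_card_restrict[OF _ products_subset_PiE[OF rank_increasing_subset_PiE]
            that(1) finite_products_rank_increasing[OF P'(1)]]) auto
    have "card (products P (rank_increasing P S r)) \<le> 2 * fact (n - 1)"
    proof (cases "?P \<subseteq> S")
      case True
      have "card (products P (rank_increasing P S r))
            \<le> card ?P * card (products ?P (rank_increasing ?P S r))"
        by (rule split) (use restrict(2) P' in auto)
      also have "\<dots> \<le> n"
        using mult_le_mono2[OF card_products_all_sinks[OF True, of r], of n] P'(2) by simp
      also have "\<dots> \<le> 2 * fact (n - 1)"
        using fact_ge_self[of "n - 1"] fact_ge_1[of "n - 1", where 'a=nat] by (cases "n \<le> 1") linarith+
      finally show ?thesis .
    next
      case False
      then obtain m' where m': "m' \<in> ?P - S" "\<forall>x\<in>?P - S. r m' \<le> r x"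
        by (rule obtain_min_rank)
      have "card (products P (rank_increasing P S r))
            \<le> card (?P - {m'}) * card (products ?P (rank_increasing ?P S r))"
        by (rule split) (use restrict(2,3) m' P' in auto)
      also have "\<dots> \<le> (n - 1) * (2 * fact (n - 2))"
        using Suc.hyps(1)[OF P'(2)[symmetric] P'(1)] P' m' by (simp add: mult_le_mono)
      also have "\<dots> \<le> 2 * fact (n - 1)"
        using mult_fact_pred_le[of "n - 1"] by (simp add: numeral_2_eq_2 algebra_simps)
      finally show ?thesis .
    qed
    then show ?thesis by (simp flip: Suc.hyps(2))
  qed
qed (use card_products_all_sinks[of "{}" S r] in simp)

section \<open>Quotients, state complexity and syntactic complexity\<close>

definition lquot :: "'a list \<Rightarrow> 'a list set \<Rightarrow> 'a list set" where
  "lquot x X = {v. x @ v \<in> X}"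

definition quotients :: "'a set \<Rightarrow> 'a list set \<Rightarrow> 'a list set set" where
  "quotients \<Sigma> L = {lquot w L | w. w \<in> lists \<Sigma>}"

lemma lquot_Nil [simp]: "lquot [] X = X"
  by (simp add: lquot_def)

lemma lquot_append: "lquot (x @ y) X = lquot y (lquot x X)"
  by (simp add: lquot_def)

lemma lquot_in_quotients: "w \<in> lists \<Sigma> \<Longrightarrow> lquot w L \<in> quotients \<Sigma> L"
  by (auto simp: quotients_def)

lemma self_in_quotients: "L \<in> quotients \<Sigma> L"
  using lquot_in_quotients[of "[]"] by simp

lemma lquot_in_quotients_closed:
  assumes "X \<in> quotients \<Sigma> L" "x \<in> lists \<Sigma>"
  shows "lquot x X \<in> quotients \<Sigma> L"
proof -
  obtain w where "w \<in> lists \<Sigma>" "X = lquot w L"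
    using assms(1) by (auto simp: quotients_def)
  then have "lquot x X = lquot (w @ x) L" "w @ x \<in> lists \<Sigma>"
    using assms(2) by (simp_all add: lquot_append)
  then show ?thesis by (simp add: lquot_in_quotients)
qed

lemma dfa_fold_in_states:
  assumes "is_dfa \<Sigma> Q \<delta> q0 Fs" "w \<in> lists \<Sigma>" "q \<in> Q"
  shows "fold (\<lambda>a q. \<delta> q a) w q \<in> Q"
  using assms(2,3) by (induction w arbitrary: q) (use assms(1) in \<open>auto simp: is_dfa_def\<close>)

lemma card_quotients_le_states:
  assumes dfa: "is_dfa \<Sigma> Q \<delta> q0 Fs" and lang: "dfa_lang \<Sigma> \<delta> q0 Fs = L"
  shows "card (quotients \<Sigma> L) \<le> card Q"
proof -
  let ?accepted_from = "\<lambda>q. {v \<in> lists \<Sigma>. fold (\<lambda>a q. \<delta> q a) v q \<in> Fs}"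
  have "quotients \<Sigma> L \<subseteq> ?accepted_from ` Q"
  proof
    fix X assume "X \<in> quotients \<Sigma> L"
    then obtain w where w: "w \<in> lists \<Sigma>" "X = lquot w L" by (auto simp: quotients_def)
    then have "X = ?accepted_from (fold (\<lambda>a q. \<delta> q a) w q0)"
      by (auto simp flip: lang simp: lquot_def dfa_lang_def)
    moreover have "fold (\<lambda>a q. \<delta> q a) w q0 \<in> Q"
      using dfa_fold_in_states[OF dfa w(1)] dfa by (auto simp: is_dfa_def)
    ultimately show "X \<in> ?accepted_from ` Q" by blast
  qed
  moreover have "finite Q" using dfa by (simp add: is_dfa_def)
  ultimately show ?thesis by (meson card_image_le card_mono finite_imageI le_trans)
qed

lemma dfa_renumber_nat:
  assumes dfa: "is_dfa \<Sigma> Q \<delta> q0 Fs"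
  shows "\<exists>(Q'::nat set) \<delta>' q0' Fs'. is_dfa \<Sigma> Q' \<delta>' q0' Fs' \<and> card Q' = card Q \<and>
           dfa_lang \<Sigma> \<delta>' q0' Fs' = dfa_lang \<Sigma> \<delta> q0 Fs"
proof -
  let ?m = "card Q"
  have "finite Q" using dfa by (simp add: is_dfa_def)
  then obtain h where h: "bij_betw h {0..<?m} Q"
    using ex_bij_betw_nat_finite by blast
  define g where "g = inv_into {0..<?m} h"
  have g: "g q < ?m" "h (g q) = q" if "q \<in> Q" for q
    using that h bij_betw_inv_into_right[OF h] bij_betw_inv_into[OF h]
    by (auto simp: g_def bij_betw_def)
  have inj_g: "inj_on g Q"
    using bij_betw_inv_into[OF h] by (simp add: g_def bij_betw_def)
  define \<delta>' where "\<delta>' i a = g (\<delta> (h i) a)" for i a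
  have run: "fold (\<lambda>a q. \<delta>' q a) w (g q) = g (fold (\<lambda>a q. \<delta> q a) w q)"
    if "w \<in> lists \<Sigma>" "q \<in> Q" for w q
    using that
  proof (induction w arbitrary: q)
    case (Cons a w)
    then have "\<delta> q a \<in> Q" using dfa by (simp add: is_dfa_def)
    with Cons show ?case by (simp add: \<delta>'_def g)
  qed simp
  have "h i \<in> Q" if "i < ?m" for i
    using h that by (auto simp: bij_betw_def)
  then have "is_dfa \<Sigma> {0..<?m} \<delta>' (g q0) (g ` Fs)"
    using dfa g by (auto simp: is_dfa_def \<delta>'_def)
  moreover have "dfa_lang \<Sigma> \<delta>' (g q0) (g ` Fs) = dfa_lang \<Sigma> \<delta> q0 Fs"
  proof -
    have "fold (\<lambda>a q. \<delta>' q a) w (g q0) \<in> g ` Fs \<longleftrightarrow> fold (\<lambda>a q. \<delta> q a) w q0 \<in> Fs"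
      if "w \<in> lists \<Sigma>" for w
      using that run[OF that] dfa_fold_in_states[OF dfa that] inj_on_image_mem_iff[OF inj_g] dfa
      by (auto simp: is_dfa_def)
    then show ?thesis by (auto simp: dfa_lang_def)
  qed
  ultimately show ?thesis
    by (intro exI[of _ "{0..<?m}"] exI[of _ \<delta>'] exI[of _ "g q0"] exI[of _ "g ` Fs"]) simp
qed

lemma quotient_dfa:
  assumes "L \<subseteq> lists \<Sigma>" "finite (quotients \<Sigma> L)"
  shows "is_dfa \<Sigma> (quotients \<Sigma> L) (\<lambda>X a. lquot [a] X) L {X \<in> quotients \<Sigma> L. [] \<in> X}"
    and "dfa_lang \<Sigma> (\<lambda>X a. lquot [a] X) L {X \<in> quotients \<Sigma> L. [] \<in> X} = L"
proof -
  have run: "fold (\<lambda>a X. lquot [a] X) w X = lquot w X" for w X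
    by (induction w arbitrary: X) (simp_all add: lquot_def)
  show "is_dfa \<Sigma> (quotients \<Sigma> L) (\<lambda>X a. lquot [a] X) L {X \<in> quotients \<Sigma> L. [] \<in> X}"
    using assms(2) self_in_quotients lquot_in_quotients_closed[of _ \<Sigma> L "[_]"]
    by (auto simp: is_dfa_def)
  have "fold (\<lambda>a X. lquot [a] X) w L \<in> {X \<in> quotients \<Sigma> L. [] \<in> X} \<longleftrightarrow> w \<in> L"
    if "w \<in> lists \<Sigma>" for w
    using lquot_in_quotients[OF that] unfolding run by (simp add: lquot_def)
  then show "dfa_lang \<Sigma> (\<lambda>X a. lquot [a] X) L {X \<in> quotients \<Sigma> L. [] \<in> X} = L"
    using assms(1) by (auto simp: dfa_lang_def)
qed

theorem state_complexity_eq_card_quotients: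
  assumes "L \<subseteq> lists \<Sigma>" "finite (quotients \<Sigma> L)"
  shows "state_complexity \<Sigma> L = card (quotients \<Sigma> L)"
  unfolding state_complexity_def
proof (rule Least_equality)
  show "\<exists>(Q::nat set) \<delta> q0 Fs. is_dfa \<Sigma> Q \<delta> q0 Fs \<and> card Q = card (quotients \<Sigma> L) \<and>
          dfa_lang \<Sigma> \<delta> q0 Fs = L"
    using dfa_renumber_nat[OF quotient_dfa(1)[OF assms]] quotient_dfa(2)[OF assms] by simp
next
  fix y assume "\<exists>(Q::nat set) \<delta> q0 Fs. is_dfa \<Sigma> Q \<delta> q0 Fs \<and> card Q = y \<and> dfa_lang \<Sigma> \<delta> q0 Fs = L"
  then obtain Q :: "nat set" and \<delta> q0 Fs
    where "is_dfa \<Sigma> Q \<delta> q0 Fs" "card Q = y" "dfa_lang \<Sigma> \<delta> q0 Fs = L"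
    by blast
  then show "card (quotients \<Sigma> L) \<le> y" using card_quotients_le_states[of \<Sigma> Q] by blast
qed

lemma card_quotient_kernel:
  assumes "A \<subseteq> B"
  shows "card (A // {(x, y). x \<in> B \<and> y \<in> B \<and> f x = f y}) = card (f ` A)"
proof -
  let ?fibre = "\<lambda>z. {y \<in> B. f y = z}" and ?R = "{(x, y). x \<in> B \<and> y \<in> B \<and> f x = f y}"
  have "A // ?R = (\<lambda>x. ?R `` {x}) ` A"
    by (simp add: quotient_def UNION_singleton_eq_range)
  also have "\<dots> = ?fibre ` f ` A"
    using assms by (auto simp: image_image intro!: image_cong)
  finally have "A // ?R = ?fibre ` f ` A" .
  moreover have "inj_on ?fibre (f ` A)"
    using assms by (intro inj_onI) (auto simp: set_eq_iff)
  ultimately show ?thesis by (simp add: card_image)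
qed

lemma syntactic_complexity_eq_card_image:
  assumes "\<And>x y. x \<in> lists \<Sigma> \<Longrightarrow> y \<in> lists \<Sigma> \<Longrightarrow>
    (\<forall>u\<in>lists \<Sigma>. \<forall>v\<in>lists \<Sigma>. u @ x @ v \<in> L \<longleftrightarrow> u @ y @ v \<in> L) \<longleftrightarrow> h x = h y"
  shows "syntactic_complexity \<Sigma> L = card (h ` (lists \<Sigma> - {[]}))"
proof -
  have "syntactic_cong \<Sigma> L = {(x, y). x \<in> lists \<Sigma> \<and> y \<in> lists \<Sigma> \<and> h x = h y}"
    using assms unfolding syntactic_cong_def by auto
  then show ?thesis unfolding syntactic_complexity_def by (simp add: card_quotient_kernel)
qed

definition word_action :: "'a set \<Rightarrow> 'a list set \<Rightarrow> 'a list \<Rightarrow> 'a list set \<Rightarrow> 'a list set" where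
  "word_action \<Sigma> L x = restrict (lquot x) (quotients \<Sigma> L)"

lemma syntactic_cong_iff_word_action:
  assumes sub: "L \<subseteq> lists \<Sigma>" and x: "x \<in> lists \<Sigma>" and y: "y \<in> lists \<Sigma>"
  shows "(\<forall>u\<in>lists \<Sigma>. \<forall>v\<in>lists \<Sigma>. u @ x @ v \<in> L \<longleftrightarrow> u @ y @ v \<in> L) \<longleftrightarrow>
         word_action \<Sigma> L x = word_action \<Sigma> L y"
proof
  assume H: "\<forall>u\<in>lists \<Sigma>. \<forall>v\<in>lists \<Sigma>. u @ x @ v \<in> L \<longleftrightarrow> u @ y @ v \<in> L"
  have "u @ x @ v \<in> L \<longleftrightarrow> u @ y @ v \<in> L" if "u \<in> lists \<Sigma>" for u v
  proof (cases "v \<in> lists \<Sigma>")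
    case False
    then have "u @ x @ v \<notin> lists \<Sigma>" "u @ y @ v \<notin> lists \<Sigma>" by auto
    then show ?thesis using sub by blast
  qed (use H that in blast)
  then have "lquot x (lquot u L) = lquot y (lquot u L)" if "u \<in> lists \<Sigma>" for u
    using that by (auto simp: lquot_def)
  then show "word_action \<Sigma> L x = word_action \<Sigma> L y"
    by (auto simp: word_action_def quotients_def fun_eq_iff)
next
  assume "word_action \<Sigma> L x = word_action \<Sigma> L y"
  then have "lquot x (lquot u L) = lquot y (lquot u L)" if "u \<in> lists \<Sigma>" for u
    using lquot_in_quotients[OF that] by (metis restrict_apply' word_action_def)
  then show "\<forall>u\<in>lists \<Sigma>. \<forall>v\<in>lists \<Sigma>. u @ x @ v \<in> L \<longleftrightarrow> u @ y @ v \<in> L"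
    by (auto simp: lquot_def set_eq_iff)
qed

theorem syntactic_complexity_eq_card_word_actions:
  assumes "L \<subseteq> lists \<Sigma>"
  shows "syntactic_complexity \<Sigma> L = card (word_action \<Sigma> L ` (lists \<Sigma> - {[]}))"
  by (rule syntactic_complexity_eq_card_image) (rule syntactic_cong_iff_word_action[OF assms])

lemma word_action_append:
  assumes "x \<in> lists \<Sigma>"
  shows "word_action \<Sigma> L (x @ y) = restrict (word_action \<Sigma> L y \<circ> word_action \<Sigma> L x) (quotients \<Sigma> L)"
  unfolding word_action_def
  by (intro restrict_ext) (simp add: lquot_in_quotients_closed[OF _ assms] lquot_append)

lemma word_actions_subset_letters_Un_products:
  "word_action \<Sigma> L ` (lists \<Sigma> - {[]}) \<subseteq>
     (\<lambda>a. word_action \<Sigma> L [a]) ` \<Sigma> \<union>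
     products (quotients \<Sigma> L) (word_action \<Sigma> L ` (lists \<Sigma> - {[]}))"
proof
  fix t assume "t \<in> word_action \<Sigma> L ` (lists \<Sigma> - {[]})"
  then obtain w where w: "w \<in> lists \<Sigma>" "w \<noteq> []" and t_w: "t = word_action \<Sigma> L w"
    by blast
  then obtain a x where "w = [a] @ x" by (cases w) auto
  with w t_w have ax: "a \<in> \<Sigma>" "x \<in> lists \<Sigma>" and t: "t = word_action \<Sigma> L ([a] @ x)"
    by auto
  show "t \<in> (\<lambda>a. word_action \<Sigma> L [a]) ` \<Sigma> \<union>
     products (quotients \<Sigma> L) (word_action \<Sigma> L ` (lists \<Sigma> - {[]}))"
  proof (cases "x = []")
    case False
    with ax have "word_action \<Sigma> L [a] \<in> word_action \<Sigma> L ` (lists \<Sigma> - {[]})"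
      "word_action \<Sigma> L x \<in> word_action \<Sigma> L ` (lists \<Sigma> - {[]})"
      by auto
    then have "t \<in> products (quotients \<Sigma> L) (word_action \<Sigma> L ` (lists \<Sigma> - {[]}))"
      using word_action_append[of "[a]" \<Sigma> L x] ax by (simp add: t restrict_comp_in_products)
    then show ?thesis ..
  qed (use ax t in simp)
qed

section \<open>Reverse definite languages\<close>

lemma reverse_definite_subset_lists: "reverse_definite \<Sigma> L \<Longrightarrow> L \<subseteq> lists \<Sigma>"
  unfolding reverse_definite_def by (fastforce simp: subset_iff)

lemma reverse_definite_long_quotients:
  assumes "reverse_definite \<Sigma> L"
  obtains k where "\<And>w. w \<in> lists \<Sigma> \<Longrightarrow> k \<le> length w \<Longrightarrow> lquot w L = {} \<or> lquot w L = lists \<Sigma>"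
proof -
  obtain E F where EF: "finite E" "finite F" "E \<subseteq> lists \<Sigma>" "F \<subseteq> lists \<Sigma>"
    and L: "L = E \<union> {f @ w | f w. f \<in> F \<and> w \<in> lists \<Sigma>}"
    using assms unfolding reverse_definite_def by blast
  define k where "k = Suc (Max (length ` (E \<union> F)))"
  have short: "length u < k" if "u \<in> E \<union> F" for u
    using that EF(1,2) unfolding k_def by (simp add: le_imp_less_Suc)
  have "lquot w L = {} \<or> lquot w L = lists \<Sigma>" if w: "w \<in> lists \<Sigma>" "k \<le> length w" for w
  proof (cases "\<exists>f\<in>F. \<exists>z. w = f @ z")
    case True
    then obtain f z where "f \<in> F" "w = f @ z" by blast
    then have "w @ v \<in> L" if "v \<in> lists \<Sigma>" for v
    proof -
      have "w @ v = f @ (z @ v)" "z @ v \<in> lists \<Sigma>" using \<open>w = f @ z\<close> w that by auto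
      with \<open>f \<in> F\<close> show ?thesis unfolding L by blast
    qed
    then have "lquot w L = lists \<Sigma>"
      using reverse_definite_subset_lists[OF assms] by (auto simp: lquot_def)
    then show ?thesis ..
  next
    case False
    have "w @ v \<notin> L" for v
    proof
      assume "w @ v \<in> L"
      moreover have "w @ v \<notin> E" using short[of "w @ v"] w by auto
      ultimately obtain f u where fu: "f \<in> F" "w @ v = f @ u" unfolding L by blast
      then have "length f \<le> length w" using short[of f] w by auto
      with fu have "w = f @ drop (length f) w"
        by (metis append_eq_append_conv_if append_take_drop_id)
      with False fu show False by blast
    qed
    then have "lquot w L = {}" by (simp add: lquot_def)
    then show ?thesis ..
  qed
  then show ?thesis by (rule that)
qed

lemma finite_quotients_if_long_quotients_trivial:
  assumes "finite \<Sigma>"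
    and "\<And>w. w \<in> lists \<Sigma> \<Longrightarrow> k \<le> length w \<Longrightarrow> lquot w L = {} \<or> lquot w L = lists \<Sigma>"
  shows "finite (quotients \<Sigma> L)"
proof (rule finite_subset)
  show "quotients \<Sigma> L \<subseteq> {{}, lists \<Sigma>} \<union> (\<lambda>w. lquot w L) ` {w. set w \<subseteq> \<Sigma> \<and> length w \<le> k}"
  proof
    fix X assume "X \<in> quotients \<Sigma> L"
    then obtain w where w: "w \<in> lists \<Sigma>" "X = lquot w L" by (auto simp: quotients_def)
    show "X \<in> {{}, lists \<Sigma>} \<union> (\<lambda>w. lquot w L) ` {w. set w \<subseteq> \<Sigma> \<and> length w \<le> k}"
    proof (cases "k \<le> length w")
      case True
      then show ?thesis using assms(2) w by blast
    next
      case False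
      then have "w \<in> {w. set w \<subseteq> \<Sigma> \<and> length w \<le> k}" using w by auto
      with w show ?thesis by blast
    qed
  qed
  show "finite ({{}, lists \<Sigma>} \<union> (\<lambda>w. lquot w L) ` {w. set w \<subseteq> \<Sigma> \<and> length w \<le> k})"
    using finite_lists_length_le[OF assms(1)] by simp
qed

text \<open>Quotients other than \<open>{}\<close> and \<open>\<Sigma>\<^sup>*\<close> are reached only by words shorter than \<open>k\<close>, so the
  maximum below is taken over a finite non-empty set for them.\<close>

definition quotient_rank :: "'a set \<Rightarrow> 'a list set \<Rightarrow> nat \<Rightarrow> 'a list set \<Rightarrow> nat" where
  "quotient_rank \<Sigma> L k X = Max (length ` {w \<in> lists \<Sigma>. lquot w L = X \<and> length w < k})"

lemma quotient_rank_less: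
  assumes k: "\<And>w. w \<in> lists \<Sigma> \<Longrightarrow> k \<le> length w \<Longrightarrow> lquot w L = {} \<or> lquot w L = lists \<Sigma>"
    and X: "X \<in> quotients \<Sigma> L" "X \<notin> {{}, lists \<Sigma>}"
    and x: "x \<in> lists \<Sigma>" "x \<noteq> []" and xX: "lquot x X \<notin> {{}, lists \<Sigma>}"
  shows "quotient_rank \<Sigma> L k X < quotient_rank \<Sigma> L k (lquot x X)"
proof -
  let ?W = "\<lambda>Y. {w \<in> lists \<Sigma>. lquot w L = Y \<and> length w < k}"
  have short: "w \<in> ?W (lquot w L)" if "w \<in> lists \<Sigma>" "lquot w L \<notin> {{}, lists \<Sigma>}" for w
    using that k[of w] by (auto simp: not_le[symmetric])
  have finW: "finite (length ` ?W Y)" for Y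
    by (rule finite_subset[of _ "{..<k}"]) auto
  obtain w0 where "w0 \<in> lists \<Sigma>" "lquot w0 L = X" using X(1) by (auto simp: quotients_def)
  with X(2) have "w0 \<in> ?W X" using short by blast
  then have "quotient_rank \<Sigma> L k X \<in> length ` ?W X"
    unfolding quotient_rank_def using finW by (intro Max_in) auto
  then obtain w where w_rank: "quotient_rank \<Sigma> L k X = length w" and "w \<in> ?W X"
    by (rule imageE)
  then have w: "w \<in> lists \<Sigma>" "lquot w L = X" by auto
  then have "lquot (w @ x) L = lquot x X" by (simp add: lquot_append)
  with w x xX have "w @ x \<in> ?W (lquot x X)" using short[of "w @ x"] by simp
  then have "length (w @ x) \<le> quotient_rank \<Sigma> L k (lquot x X)"
    unfolding quotient_rank_def by (intro Max_ge finW imageI)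
  moreover have "length x > 0" using x by simp
  ultimately show ?thesis using w_rank length_append[of w x] by linarith
qed

lemma word_actions_rank_increasing:
  assumes k: "\<And>w. w \<in> lists \<Sigma> \<Longrightarrow> k \<le> length w \<Longrightarrow> lquot w L = {} \<or> lquot w L = lists \<Sigma>"
  shows "word_action \<Sigma> L ` (lists \<Sigma> - {[]}) \<subseteq>
           rank_increasing (quotients \<Sigma> L) {{}, lists \<Sigma>} (quotient_rank \<Sigma> L k)"
proof
  fix t assume "t \<in> word_action \<Sigma> L ` (lists \<Sigma> - {[]})"
  then obtain x where x: "x \<in> lists \<Sigma>" "x \<noteq> []" and t: "t = word_action \<Sigma> L x" by blast
  have "lquot x {} = {}" "lquot x (lists \<Sigma>) = lists \<Sigma>"
    using x by (auto simp: lquot_def)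
  then have fixes_sinks: "t X = X" if "X \<in> quotients \<Sigma> L" "X \<in> {{}, lists \<Sigma>}" for X
    using that by (auto simp: t word_action_def)
  have moves: "t X \<in> {{}, lists \<Sigma>} \<or> quotient_rank \<Sigma> L k X < quotient_rank \<Sigma> L k (t X)"
    if "X \<in> quotients \<Sigma> L" "X \<notin> {{}, lists \<Sigma>}" for X
  proof (cases "lquot x X \<in> {{}, lists \<Sigma>}")
    case False
    then show ?thesis
      using quotient_rank_less[OF k that x False] that by (simp add: t word_action_def)
  qed (use that in \<open>simp add: t word_action_def\<close>)
  have "t \<in> quotients \<Sigma> L \<rightarrow>\<^sub>E quotients \<Sigma> L"
    using lquot_in_quotients_closed[OF _ x(1)] by (simp add: t word_action_def)
  then show "t \<in> rank_increasing (quotients \<Sigma> L) {{}, lists \<Sigma>} (quotient_rank \<Sigma> L k)"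
    unfolding rank_increasing_def using fixes_sinks moves by (intro CollectI conjI ballI impI) auto
qed

lemma reverse_definite_rank_increasing:
  assumes "finite \<Sigma>" "reverse_definite \<Sigma> L"
  obtains r where "finite (quotients \<Sigma> L)"
    and "word_action \<Sigma> L ` (lists \<Sigma> - {[]}) \<subseteq> rank_increasing (quotients \<Sigma> L) {{}, lists \<Sigma>} r"
proof -
  obtain k where k: "\<And>w. w \<in> lists \<Sigma> \<Longrightarrow> k \<le> length w \<Longrightarrow> lquot w L = {} \<or> lquot w L = lists \<Sigma>"
    using reverse_definite_long_quotients[OF assms(2)] by blast
  show ?thesis
  proof (rule that)
    show "finite (quotients \<Sigma> L)"
      using assms(1) k by (rule finite_quotients_if_long_quotients_trivial)
    show "word_action \<Sigma> L ` (lists \<Sigma> - {[]}) \<subseteq>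
        rank_increasing (quotients \<Sigma> L) {{}, lists \<Sigma>} (quotient_rank \<Sigma> L k)"
      using k by (rule word_actions_rank_increasing)
  qed
qed

theorem reverse_definite_syntactic_complexity_le:
  assumes "finite \<Sigma>" "reverse_definite \<Sigma> L"
  shows "syntactic_complexity \<Sigma> L \<le> fact (state_complexity \<Sigma> L - 1)"
proof -
  obtain r where fin: "finite (quotients \<Sigma> L)" and sub: "word_action \<Sigma> L ` (lists \<Sigma> - {[]}) \<subseteq>
      rank_increasing (quotients \<Sigma> L) {{}, lists \<Sigma>} r"
    using reverse_definite_rank_increasing[OF assms] .
  have L: "L \<subseteq> lists \<Sigma>" using reverse_definite_subset_lists[OF assms(2)] .
  have "syntactic_complexity \<Sigma> L \<le> card (rank_increasing (quotients \<Sigma> L) {{}, lists \<Sigma>} r)"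
    unfolding syntactic_complexity_eq_card_word_actions[OF L]
    using sub fin by (intro card_mono finite_rank_increasing)
  also have "\<dots> \<le> fact (card (quotients \<Sigma> L) - 1)"
    using fin by (rule card_rank_increasing_le)
  finally show ?thesis using state_complexity_eq_card_quotients[OF L fin] by simp
qed

text \<open>If the bound is attained, the word actions are all of \<open>rank_increasing\<close>; those that are
  not induced by a single letter are products of two of them, and there are few such products.\<close>

theorem reverse_definite_card_alphabet_ge:
  assumes "finite \<Sigma>" "reverse_definite \<Sigma> L"
    and max: "syntactic_complexity \<Sigma> L = fact (state_complexity \<Sigma> L - 1)"
  shows "fact (state_complexity \<Sigma> L - 1) - 2 * fact (state_complexity \<Sigma> L - 2) \<le> card \<Sigma>"
proof -
  obtain r where fin: "finite (quotients \<Sigma> L)" and sub: "word_action \<Sigma> L ` (lists \<Sigma> - {[]}) \<subseteq>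
      rank_increasing (quotients \<Sigma> L) {{}, lists \<Sigma>} r"
    using reverse_definite_rank_increasing[OF assms(1,2)] .
  have L: "L \<subseteq> lists \<Sigma>" using reverse_definite_subset_lists[OF assms(2)] .
  let ?Q = "quotients \<Sigma> L" and ?T = "word_action \<Sigma> L ` (lists \<Sigma> - {[]})"
  let ?R = "rank_increasing ?Q {{}, lists \<Sigma>} r"
  have sc: "state_complexity \<Sigma> L = card ?Q"
    using state_complexity_eq_card_quotients[OF L fin] .
  have "card ?R \<le> card ?T"
    using max card_rank_increasing_le[OF fin, of "{{}, lists \<Sigma>}" r]
    by (simp add: sc syntactic_complexity_eq_card_word_actions[OF L])
  then have T: "?T = ?R"
    using card_seteq[OF finite_rank_increasing[OF fin] sub] by simp
  have "card ?R \<le> card ((\<lambda>a. word_action \<Sigma> L [a]) ` \<Sigma> \<union> products ?Q ?R)"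
    using word_actions_subset_letters_Un_products[of \<Sigma> L] fin assms(1)
    by (intro card_mono) (auto simp: T finite_products_rank_increasing)
  also have "\<dots> \<le> card \<Sigma> + 2 * fact (card ?Q - 2)"
    using card_Un_le card_image_le[OF assms(1)] card_products_rank_increasing_le[OF fin]
    by (meson add_mono order_trans)
  finally show ?thesis
    using max sc T by (simp add: syntactic_complexity_eq_card_word_actions[OF L])
qed

section \<open>Languages attaining the bounds\<close>

text \<open>States \<open>0, \<dots>, n - 3\<close> are transient, \<open>n - 2\<close> is the rejecting and \<open>n - 1\<close> the accepting
  sink.\<close>

definition increasing_maps :: "nat \<Rightarrow> (nat \<Rightarrow> nat) set" where
  "increasing_maps n = (\<Pi>\<^sub>E i\<in>{0..<n}. if i < n - 2 then {i<..<n} else {i})"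

definition shift_reject :: "nat \<Rightarrow> nat \<Rightarrow> nat" where
  "shift_reject n = restrict (\<lambda>i. if i < n - 2 then i + 1 else i) {0..<n}"

definition shift_accept :: "nat \<Rightarrow> nat \<Rightarrow> nat" where
  "shift_accept n = restrict (\<lambda>i. if i < n - 3 then i + 1 else if i = n - 3 then n - 1 else i) {0..<n}"

lemma finite_increasing_maps: "finite (increasing_maps n)"
  by (simp add: increasing_maps_def finite_PiE)

lemma card_increasing_maps:
  assumes "2 \<le> n"
  shows "card (increasing_maps n) = fact (n - 1)"
proof -
  have "card (increasing_maps n) = (\<Prod>i\<in>{0..<n}. card (if i < n - 2 then {i<..<n} else {i}))"
    by (simp add: increasing_maps_def card_PiE)
  also have "\<dots> = (\<Prod>i\<in>{0..<n - 1}. n - 1 - i)"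
    using assms by (intro prod.mono_neutral_cong_right) auto
  also have "\<dots> = fact (n - 1)"
    by (simp add: fact_prod_rev)
  finally show ?thesis .
qed

lemma increasing_maps_apply:
  assumes "t \<in> increasing_maps n" "i < n"
  shows "if i < n - 2 then i < t i \<and> t i < n else t i = i"
proof -
  have "t i \<in> (if i < n - 2 then {i<..<n} else {i})"
    using PiE_mem[OF assms(1)[unfolded increasing_maps_def], of i] assms(2) by simp
  then show ?thesis by (simp split: if_splits)
qed

lemma shift_reject_in_increasing_maps: "shift_reject n \<in> increasing_maps n"
  by (auto simp: increasing_maps_def shift_reject_def)

lemma shift_accept_in_increasing_maps: "3 \<le> n \<Longrightarrow> shift_accept n \<in> increasing_maps n"
  by (auto simp: increasing_maps_def shift_accept_def)

lemma funpow_shift_reject: "2 \<le> n \<Longrightarrow> i \<le> n - 2 \<Longrightarrow> (shift_reject n ^^ k) i = min (i + k) (n - 2)"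
  by (induction k) (auto simp: shift_reject_def)

lemma funpow_shift_accept:
  "3 \<le> n \<Longrightarrow> i \<le> n - 3 \<Longrightarrow> (shift_accept n ^^ k) i = (if i + k \<le> n - 3 then i + k else n - 1)"
  by (induction k) (auto simp: shift_accept_def)

locale increasing_automaton =
  fixes n :: nat and \<Sigma> :: "'a set" and \<tau> :: "'a \<Rightarrow> nat \<Rightarrow> nat" and a0 a1 :: 'a
  assumes three_le: "3 \<le> n" and finite_alphabet: "finite \<Sigma>"
    and letter_increasing: "a \<in> \<Sigma> \<Longrightarrow> \<tau> a \<in> increasing_maps n"
    and a0: "a0 \<in> \<Sigma>" "\<tau> a0 = shift_reject n"
    and a1: "a1 \<in> \<Sigma>" "\<tau> a1 = shift_accept n"
begin

definition lang :: "'a list set" where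
  "lang = {w \<in> lists \<Sigma>. fold \<tau> w 0 = n - 1}"

definition accepted_from :: "nat \<Rightarrow> 'a list set" where
  "accepted_from i = {v \<in> lists \<Sigma>. fold \<tau> v i = n - 1}"

lemma fold_less: "w \<in> lists \<Sigma> \<Longrightarrow> i < n \<Longrightarrow> fold \<tau> w i < n"
  by (induction w arbitrary: i) (auto dest!: letter_increasing increasing_maps_apply split: if_splits)

lemma fold_sink: "w \<in> lists \<Sigma> \<Longrightarrow> n - 2 \<le> i \<Longrightarrow> i < n \<Longrightarrow> fold \<tau> w i = i"
  by (induction w) (auto dest!: letter_increasing increasing_maps_apply split: if_splits)

lemma fold_lower: "w \<in> lists \<Sigma> \<Longrightarrow> i < n \<Longrightarrow> min (i + length w) (n - 2) \<le> fold \<tau> w i"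
proof (induction w arbitrary: i)
  case (Cons a w)
  show ?case
  proof (cases "i < n - 2")
    case True
    with Cons.prems have "i < \<tau> a i" "\<tau> a i < n"
      using increasing_maps_apply[OF letter_increasing, of a i] by auto
    moreover have "w \<in> lists \<Sigma>" using Cons.prems by simp
    ultimately show ?thesis using Cons.IH[of "\<tau> a i"] by (simp add: min_def split: if_splits)
  qed (use Cons.prems fold_sink[of "a # w" i] in auto)
qed simp

lemma fold_replicate_shift_reject: "i \<le> n - 2 \<Longrightarrow> fold \<tau> (replicate k a0) i = min (i + k) (n - 2)"
  using three_le by (simp add: fold_replicate a0 funpow_shift_reject)

lemma fold_replicate_shift_accept:
  "i \<le> n - 3 \<Longrightarrow> fold \<tau> (replicate k a1) i = (if i + k \<le> n - 3 then i + k else n - 1)"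
  by (simp add: fold_replicate a1 funpow_shift_accept three_le)

text \<open>After \<open>n - 2\<close> letters the run has reached one of the sinks, so membership in \<open>lang\<close>
  is decided by the prefix of length \<open>n - 2\<close>.\<close>

lemma fold_eq_fold_take:
  assumes "w \<in> lists \<Sigma>"
  shows "fold \<tau> w 0 = fold \<tau> (take (n - 2) w) 0"
proof -
  let ?f = "take (n - 2) w" and ?v = "drop (n - 2) w"
  have fv: "?f \<in> lists \<Sigma>" "?v \<in> lists \<Sigma>"
    using assms by (auto dest: in_set_takeD in_set_dropD)
  have "n - 2 \<le> fold \<tau> ?f 0" if "n - 2 < length w"
    using fold_lower[OF fv(1), of 0] that three_le by simp
  moreover have "fold \<tau> ?f 0 < n" using fold_less[OF fv(1), of 0] three_le by simp
  ultimately show ?thesis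
    using fold_sink[OF fv(2)] fold_append[of \<tau> ?f ?v] append_take_drop_id[of "n - 2" w]
    by (cases "n - 2 < length w") (auto simp del: fold_append append_take_drop_id)
qed

lemma reverse_definite_lang: "reverse_definite \<Sigma> lang"
proof -
  define F where "F = {w \<in> lists \<Sigma>. length w \<le> n - 2 \<and> fold \<tau> w 0 = n - 1}"
  have "finite F"
    unfolding F_def using finite_lists_length_le[OF finite_alphabet, of "n - 2"]
    by (rule rev_finite_subset) auto
  moreover have "lang = {} \<union> {f @ w | f w. f \<in> F \<and> w \<in> lists \<Sigma>}"
  proof (intro equalityI subsetI)
    fix w assume w: "w \<in> lang"
    then have "take (n - 2) w \<in> F" "drop (n - 2) w \<in> lists \<Sigma>"
      using fold_eq_fold_take[of w] by (auto simp: F_def lang_def dest: in_set_takeD in_set_dropD)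
    then show "w \<in> {} \<union> {f @ w | f w. f \<in> F \<and> w \<in> lists \<Sigma>}"
      by (intro UnI2 CollectI exI[of _ "take (n - 2) w"] exI[of _ "drop (n - 2) w"]) simp
  next
    fix w assume "w \<in> {} \<union> {f @ w | f w. f \<in> F \<and> w \<in> lists \<Sigma>}"
    then obtain f v where fv: "w = f @ v" "f \<in> F" "v \<in> lists \<Sigma>" by blast
    then show "w \<in> lang"
      using fold_sink[OF fv(3), of "n - 1"] three_le by (auto simp: F_def lang_def)
  qed
  ultimately show ?thesis
    unfolding reverse_definite_def F_def by blast
qed

lemma lquot_lang: "w \<in> lists \<Sigma> \<Longrightarrow> lquot w lang = accepted_from (fold \<tau> w 0)"
  by (auto simp: lquot_def lang_def accepted_from_def)

lemma state_reachable: "i < n \<Longrightarrow> \<exists>w\<in>lists \<Sigma>. fold \<tau> w 0 = i"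
proof (cases "i \<le> n - 2")
  case True
  then show ?thesis
    using fold_replicate_shift_reject[of 0 i] a0(1)
    by (intro bexI[of _ "replicate i a0"]) (simp_all add: in_lists_conv_set)
next
  case False
  moreover assume "i < n"
  ultimately show ?thesis
    using fold_replicate_shift_accept[of 0 "n - 2"] a1(1) three_le
    by (intro bexI[of _ "replicate (n - 2) a1"]) auto
qed

lemma accepted_from_accept: "accepted_from (n - 1) = lists \<Sigma>"
proof -
  have "fold \<tau> w (n - 1) = n - 1" if "w \<in> lists \<Sigma>" for w
    using fold_sink[OF that, of "n - 1"] three_le by simp
  then show ?thesis by (auto simp: accepted_from_def)
qed

lemma accepted_from_reject: "accepted_from (n - 2) = {}"
proof -
  have "fold \<tau> w (n - 2) = n - 2" if "w \<in> lists \<Sigma>" for w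
    using fold_sink[OF that, of "n - 2"] three_le by simp
  then show ?thesis using three_le by (auto simp: accepted_from_def)
qed

lemma replicate_accept_not_accepted:
  "i \<le> n - 3 \<Longrightarrow> k \<le> n - 3 - i \<Longrightarrow> replicate k a1 \<notin> accepted_from i"
  using fold_replicate_shift_accept[of i k] three_le by (auto simp: accepted_from_def)

lemma replicate_accept_accepted: "i \<le> n - 3 \<Longrightarrow> replicate (n - 2 - i) a1 \<in> accepted_from i"
  using fold_replicate_shift_accept[of i "n - 2 - i"] a1(1) three_le
  by (auto simp: accepted_from_def)

lemma accepted_from_neq:
  assumes "i < j" "j < n"
  shows "accepted_from i \<noteq> accepted_from j"
proof (cases "j \<le> n - 3")
  case True
  moreover have "i \<le> n - 3" "n - 2 - j \<le> n - 3 - i" using True assms by arith+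
  ultimately show ?thesis
    using replicate_accept_not_accepted[of i "n - 2 - j"] replicate_accept_accepted[of j] by auto
next
  case j_sink: False
  show ?thesis
  proof (cases "i \<le> n - 3")
    case True
    have "j = n - 2 \<or> j = n - 1" using j_sink assms by arith
    then show ?thesis
    proof
      assume "j = n - 2"
      then show ?thesis using replicate_accept_accepted[OF True] accepted_from_reject by auto
    next
      assume "j = n - 1"
      moreover have "replicate (n - 3 - i) a0 \<in> lists \<Sigma> - accepted_from i"
        using True fold_replicate_shift_reject[of i] a0(1) three_le
        by (auto simp: accepted_from_def)
      ultimately show ?thesis using accepted_from_accept by auto
    qed
  next
    case False
    then have "i = n - 2" "j = n - 1" using assms j_sink by auto
    then show ?thesis using accepted_from_accept accepted_from_reject by auto
  qed
qed

lemma inj_on_accepted_from: "inj_on accepted_from {0..<n}"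
  by (intro inj_onI) (metis accepted_from_neq atLeastLessThan_iff linorder_neqE_nat)

lemma quotients_lang: "quotients \<Sigma> lang = accepted_from ` {0..<n}"
proof
  show "quotients \<Sigma> lang \<subseteq> accepted_from ` {0..<n}"
  proof
    fix X assume "X \<in> quotients \<Sigma> lang"
    then obtain w where w: "w \<in> lists \<Sigma>" "X = lquot w lang"
      by (auto simp: quotients_def)
    then show "X \<in> accepted_from ` {0..<n}"
      using lquot_lang[OF w(1)] fold_less[OF w(1), of 0] three_le by auto
  qed
  show "accepted_from ` {0..<n} \<subseteq> quotients \<Sigma> lang"
  proof
    fix X assume "X \<in> accepted_from ` {0..<n}"
    then obtain i where "i < n" "X = accepted_from i" by auto
    moreover obtain w where "w \<in> lists \<Sigma>" "fold \<tau> w 0 = i"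
      using state_reachable[OF \<open>i < n\<close>] by blast
    ultimately show "X \<in> quotients \<Sigma> lang"
      using lquot_lang lquot_in_quotients by metis
  qed
qed

lemma state_complexity_lang: "state_complexity \<Sigma> lang = n"
proof -
  have "card (quotients \<Sigma> lang) = n"
    by (simp add: quotients_lang card_image[OF inj_on_accepted_from])
  moreover have "lang \<subseteq> lists \<Sigma>" by (auto simp: lang_def)
  ultimately show ?thesis
    using state_complexity_eq_card_quotients[of lang \<Sigma>] by (simp add: quotients_lang)
qed

definition transition :: "'a list \<Rightarrow> nat \<Rightarrow> nat" where
  "transition x = restrict (fold \<tau> x) {0..<n}"

lemma accepted_from_subset_lists: "accepted_from i \<subseteq> lists \<Sigma>"
  by (auto simp: accepted_from_def)

lemma syntactic_cong_lang_iff: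
  assumes x: "x \<in> lists \<Sigma>" and y: "y \<in> lists \<Sigma>"
  shows "(\<forall>u\<in>lists \<Sigma>. \<forall>v\<in>lists \<Sigma>. u @ x @ v \<in> lang \<longleftrightarrow> u @ y @ v \<in> lang) \<longleftrightarrow>
         transition x = transition y"
proof -
  have mem: "u @ z @ v \<in> lang \<longleftrightarrow> v \<in> accepted_from (fold \<tau> z (fold \<tau> u 0))"
    if "u \<in> lists \<Sigma>" "z \<in> lists \<Sigma>" for u z v
    using that by (auto simp: lang_def accepted_from_def)
  have set_eq: "(\<forall>v\<in>lists \<Sigma>. v \<in> accepted_from i \<longleftrightarrow> v \<in> accepted_from j) \<longleftrightarrow>
      accepted_from i = accepted_from j" for i j
    using accepted_from_subset_lists by blast
  have "(\<forall>u\<in>lists \<Sigma>. \<forall>v\<in>lists \<Sigma>. u @ x @ v \<in> lang \<longleftrightarrow> u @ y @ v \<in> lang) \<longleftrightarrow>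
        (\<forall>u\<in>lists \<Sigma>. accepted_from (fold \<tau> x (fold \<tau> u 0)) = accepted_from (fold \<tau> y (fold \<tau> u 0)))"
    using x y by (simp add: mem set_eq)
  also have "\<dots> \<longleftrightarrow> (\<forall>i<n. fold \<tau> x i = fold \<tau> y i)"
  proof
    assume eq: "\<forall>u\<in>lists \<Sigma>. accepted_from (fold \<tau> x (fold \<tau> u 0)) = accepted_from (fold \<tau> y (fold \<tau> u 0))"
    show "\<forall>i<n. fold \<tau> x i = fold \<tau> y i"
    proof (intro allI impI)
      fix i assume "i < n"
      then obtain u where "u \<in> lists \<Sigma>" "fold \<tau> u 0 = i" using state_reachable by blast
      with eq have "accepted_from (fold \<tau> x i) = accepted_from (fold \<tau> y i)" by blast
      moreover have "fold \<tau> x i \<in> {0..<n}" "fold \<tau> y i \<in> {0..<n}"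
        using fold_less[OF x \<open>i < n\<close>] fold_less[OF y \<open>i < n\<close>] by auto
      ultimately show "fold \<tau> x i = fold \<tau> y i" by (rule inj_onD[OF inj_on_accepted_from])
    qed
  next
    assume "\<forall>i<n. fold \<tau> x i = fold \<tau> y i"
    then show "\<forall>u\<in>lists \<Sigma>. accepted_from (fold \<tau> x (fold \<tau> u 0)) = accepted_from (fold \<tau> y (fold \<tau> u 0))"
      using fold_less[of _ 0] three_le by simp
  qed
  also have "\<dots> \<longleftrightarrow> transition x = transition y"
    unfolding transition_def by (metis atLeastLessThan_iff restrict_apply' restrict_ext zero_le)
  finally show ?thesis .
qed

lemma syntactic_complexity_lang:
  "syntactic_complexity \<Sigma> lang = card (transition ` (lists \<Sigma> - {[]}))"
  by (rule syntactic_complexity_eq_card_image) (rule syntactic_cong_lang_iff)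

lemma transition_in_increasing_maps:
  assumes "x \<in> lists \<Sigma>" "x \<noteq> []"
  shows "transition x \<in> increasing_maps n"
  unfolding transition_def increasing_maps_def restrict_PiE_iff
proof
  fix i assume "i \<in> {0..<n}"
  moreover have "i < fold \<tau> x i" if "i < n - 2"
  proof -
    have "min (i + length x) (n - 2) \<le> fold \<tau> x i" using fold_lower[OF assms(1), of i] that by simp
    moreover have "length x \<noteq> 0" using assms(2) by simp
    ultimately show ?thesis using that by arith
  qed
  ultimately show "fold \<tau> x i \<in> (if i < n - 2 then {i<..<n} else {i})"
    using fold_less[OF assms(1)] fold_sink[OF assms(1)] by auto
qed

lemma transition_single: "a \<in> \<Sigma> \<Longrightarrow> transition [a] = \<tau> a"
  using letter_increasing[of a] by (auto simp: transition_def increasing_maps_def PiE_iff extensional_def fun_eq_iff)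

lemma transition_two: "a \<in> \<Sigma> \<Longrightarrow> transition [a, b] = restrict (\<tau> b \<circ> \<tau> a) {0..<n}"
  by (simp add: transition_def)

lemma transitions_eq_increasing_maps:
  assumes "increasing_maps n \<subseteq> \<tau> ` \<Sigma> \<union> products {0..<n} (\<tau> ` \<Sigma>)"
  shows "transition ` (lists \<Sigma> - {[]}) = increasing_maps n"
proof
  show "transition ` (lists \<Sigma> - {[]}) \<subseteq> increasing_maps n"
    using transition_in_increasing_maps by blast
  show "increasing_maps n \<subseteq> transition ` (lists \<Sigma> - {[]})"
  proof
    fix s assume "s \<in> increasing_maps n"
    with assms consider a where "a \<in> \<Sigma>" "s = \<tau> a"
      | a b where "a \<in> \<Sigma>" "b \<in> \<Sigma>" "s = restrict (\<tau> b \<circ> \<tau> a) {0..<n}"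
      by (auto simp: products_def)
    then show "s \<in> transition ` (lists \<Sigma> - {[]})"
    proof cases
      case (1 a)
      then show ?thesis using transition_single by (intro image_eqI[of _ _ "[a]"]) auto
    next
      case (2 a b)
      then show ?thesis using transition_two by (intro image_eqI[of _ _ "[a, b]"]) auto
    qed
  qed
qed

end

lemma generated_language:
  assumes n: "3 \<le> n" and A: "finite A" "A \<subseteq> increasing_maps n"
    and shifts: "shift_reject n \<in> A" "shift_accept n \<in> A"
    and generates: "increasing_maps n \<subseteq> A \<union> products {0..<n} A"
  shows "\<exists>(\<Sigma>::nat set) L. finite \<Sigma> \<and> \<Sigma> \<noteq> {} \<and> reverse_definite \<Sigma> L \<and> card \<Sigma> = card A \<and>
           state_complexity \<Sigma> L = n \<and> syntactic_complexity \<Sigma> L = card (increasing_maps n)"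
proof -
  define \<Sigma> where "\<Sigma> = {0..<card A}"
  obtain enc where enc: "bij_betw enc \<Sigma> A"
    unfolding \<Sigma>_def using ex_bij_betw_nat_finite[OF A(1)] by blast
  then have enc_image: "enc ` \<Sigma> = A" by (simp add: bij_betw_def)
  obtain a0 where "shift_reject n = enc a0" "a0 \<in> \<Sigma>"
    using shifts(1) unfolding enc_image[symmetric] by (rule imageE)
  moreover obtain a1 where "shift_accept n = enc a1" "a1 \<in> \<Sigma>"
    using shifts(2) unfolding enc_image[symmetric] by (rule imageE)
  ultimately interpret increasing_automaton n \<Sigma> enc a0 a1
    using n A(2) enc_image by unfold_locales (auto simp: \<Sigma>_def)
  have "transition ` (lists \<Sigma> - {[]}) = increasing_maps n"
    using generates by (simp add: enc_image transitions_eq_increasing_maps)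
  then show ?thesis
    using finite_alphabet a0(1) reverse_definite_lang state_complexity_lang syntactic_complexity_lang
    by (intro exI[of _ \<Sigma>] exI[of _ lang]) (auto simp: \<Sigma>_def)
qed

definition two_step_maps :: "nat \<Rightarrow> (nat \<Rightarrow> nat) set" where
  "two_step_maps n =
     (\<Pi>\<^sub>E i\<in>{0..<n}. if i < n - 3 then {i + 1<..<n} else if i < n - 2 then {n - 2, n - 1} else {i})"

lemma two_step_maps_subset: "two_step_maps n \<subseteq> increasing_maps n"
  unfolding two_step_maps_def increasing_maps_def by (rule PiE_mono) auto

lemma card_two_step_maps:
  assumes "3 \<le> n"
  shows "card (two_step_maps n) = 2 * fact (n - 2)"
proof -
  let ?c = "\<lambda>i. card (if i < n - 3 then {i + 1<..<n} else if i < n - 2 then {n - 2, n - 1} else {i})"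
  have "card (two_step_maps n) = (\<Prod>i\<in>{0..<n}. ?c i)"
    by (simp add: two_step_maps_def card_PiE)
  also have "\<dots> = (\<Prod>i\<in>insert (n - 3) {0..<n - 3}. ?c i)"
    using assms by (intro prod.mono_neutral_right) auto
  also have "\<dots> = 2 * (\<Prod>i\<in>{0..<n - 3}. ?c i)"
    using assms by simp
  also have "(\<Prod>i\<in>{0..<n - 3}. ?c i) = (\<Prod>i\<in>{0..<n - 2}. n - 2 - i)"
    using assms by (intro prod.mono_neutral_cong_left) auto
  also have "\<dots> = fact (n - 2)"
    by (simp add: fact_prod_rev)
  finally show ?thesis .
qed

lemma card_increasing_maps_minus_two_step:
  assumes "3 \<le> n"
  shows "card (increasing_maps n - two_step_maps n) = fact (n - 1) - 2 * fact (n - 2)"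
proof -
  have "finite (two_step_maps n)" by (simp add: two_step_maps_def finite_PiE)
  then show ?thesis
    using assms card_Diff_subset[OF _ two_step_maps_subset] card_increasing_maps[of n]
      card_two_step_maps[OF assms]
    by simp
qed

lemma not_two_step_if_first_step:
  assumes "4 \<le> n" "t 0 = 1"
  shows "t \<notin> two_step_maps n"
proof
  assume t: "t \<in> two_step_maps n"
  have "t 0 \<in> (if 0 < n - 3 then {0 + 1<..<n} else if 0 < n - 2 then {n - 2, n - 1} else {0})"
    using PiE_mem[OF t[unfolded two_step_maps_def], of 0] assms(1) by simp
  moreover have "0 < n - 3" using assms(1) by simp
  ultimately show False using assms(2) by simp
qed

lemma shifts_not_two_step:
  assumes "4 \<le> n"
  shows "shift_reject n \<in> increasing_maps n - two_step_maps n"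
    and "shift_accept n \<in> increasing_maps n - two_step_maps n"
proof -
  have "shift_reject n 0 = 1" "shift_accept n 0 = 1"
    using assms by (simp_all add: shift_reject_def shift_accept_def)
  then show "shift_reject n \<in> increasing_maps n - two_step_maps n"
    and "shift_accept n \<in> increasing_maps n - two_step_maps n"
    using assms not_two_step_if_first_step shift_reject_in_increasing_maps[of n]
      shift_accept_in_increasing_maps[of n]
    by simp_all
qed

lemma two_step_maps_apply:
  assumes "s \<in> two_step_maps n" "i < n"
  shows "s i \<in> (if i < n - 3 then {i + 1<..<n} else if i < n - 2 then {n - 2, n - 1} else {i})"
  using PiE_mem[OF assms(1)[unfolded two_step_maps_def], of i] assms(2) by simp

lemma two_step_maps_apply_last_transient:
  assumes "s \<in> two_step_maps n" "3 \<le> n"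
  shows "s (n - 3) \<in> {n - 2, n - 1}"
proof -
  have "n - 3 < n - 2" "n - 3 < n" using assms(2) by arith+
  then show ?thesis using two_step_maps_apply[OF assms(1), of "n - 3"] by simp
qed

text \<open>Every two-step map \<open>s\<close> factors as \<open>delayed n s \<circ> shift_then n (s (n - 3))\<close>: first
  one step forward (with \<open>n - 3\<close> sent directly to \<open>s (n - 3)\<close>), then \<open>s\<close> shifted by one.\<close>

definition shift_then :: "nat \<Rightarrow> nat \<Rightarrow> nat \<Rightarrow> nat" where
  "shift_then n j = restrict (\<lambda>i. if i < n - 3 then i + 1 else if i = n - 3 then j else i) {0..<n}"

definition delayed :: "nat \<Rightarrow> (nat \<Rightarrow> nat) \<Rightarrow> nat \<Rightarrow> nat" where
  "delayed n s = restrict (\<lambda>j. if j = 0 then 1 else if j \<le> n - 3 then s (j - 1) else j) {0..<n}"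

lemma shift_then_not_two_step:
  assumes "4 \<le> n" "n - 2 \<le> j" "j < n"
  shows "shift_then n j \<in> increasing_maps n - two_step_maps n"
proof
  show "shift_then n j \<in> increasing_maps n"
    unfolding shift_then_def increasing_maps_def restrict_PiE_iff using assms by auto
  show "shift_then n j \<notin> two_step_maps n"
    using assms by (intro not_two_step_if_first_step) (auto simp: shift_then_def)
qed

lemma delayed_not_two_step:
  assumes n: "4 \<le> n" and s: "s \<in> two_step_maps n"
  shows "delayed n s \<in> increasing_maps n - two_step_maps n"
proof
  have "s (j - 1) \<in> {j<..<n}" if "0 < j" "j \<le> n - 3" for j
  proof -
    have "j - 1 < n - 3" "j - 1 < n" "j - 1 + 1 = j" using that n by auto
    then show ?thesis using two_step_maps_apply[OF s, of "j - 1"] by simp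
  qed
  then show "delayed n s \<in> increasing_maps n"
    unfolding delayed_def increasing_maps_def restrict_PiE_iff using n by auto
  show "delayed n s \<notin> two_step_maps n"
    using n by (intro not_two_step_if_first_step) (auto simp: delayed_def)
qed

lemma two_step_maps_factor:
  assumes n: "4 \<le> n" and s: "s \<in> two_step_maps n"
  shows "s = restrict (delayed n s \<circ> shift_then n (s (n - 3))) {0..<n}"
proof
  fix i
  have sink: "s (n - 3) \<in> {n - 2, n - 1}" using two_step_maps_apply_last_transient s n by simp
  show "s i = restrict (delayed n s \<circ> shift_then n (s (n - 3))) {0..<n} i"
  proof (cases "i < n")
    case True
    consider "i < n - 3" | "i = n - 3" | "n - 2 \<le> i" by linarith
    then show ?thesis
    proof cases
      case 1
      then have "i + 1 \<le> n - 3" "i + 1 < n" "i + 1 - 1 = i" by auto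
      with 1 True show ?thesis by (simp add: shift_then_def delayed_def)
    next
      case 2
      with sink n show ?thesis by (auto simp: shift_then_def delayed_def)
    next
      case 3
      then have "\<not> i < n - 3" "i \<noteq> n - 3" "i \<noteq> 0" "\<not> i \<le> n - 3" "\<not> i < n - 2"
        using n by auto
      with True two_step_maps_apply[OF s, of i] show ?thesis by (simp add: shift_then_def delayed_def)
    qed
  next
    case False
    then show ?thesis using s by (simp add: two_step_maps_def PiE_iff extensional_def)
  qed
qed

lemma two_step_maps_products:
  assumes "4 \<le> n" "s \<in> two_step_maps n"
  shows "s \<in> products {0..<n} (increasing_maps n - two_step_maps n)"
proof -
  have "s (n - 3) \<in> {n - 2, n - 1}"
    using two_step_maps_apply_last_transient assms by simp
  then have "shift_then n (s (n - 3)) \<in> increasing_maps n - two_step_maps n"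
    using assms(1) by (intro shift_then_not_two_step) auto
  with two_step_maps_factor[OF assms] delayed_not_two_step[OF assms] show ?thesis
    by (metis restrict_comp_in_products)
qed

definition long_unary_words :: "nat \<Rightarrow> nat list set" where
  "long_unary_words m = {w \<in> lists {0}. m \<le> length w}"

lemma reverse_definite_long_unary_words: "reverse_definite {0} (long_unary_words m)"
proof -
  have "long_unary_words m = {} \<union> {f @ w | f w. f \<in> {replicate m 0} \<and> w \<in> lists {0}}"
  proof (intro equalityI subsetI)
    fix w assume w: "w \<in> long_unary_words m"
    then have "w = replicate (length w) 0"
      using replicate_length_same[of w 0] by (auto simp: long_unary_words_def)
    with w have "w = replicate m 0 @ replicate (length w - m) 0"
      by (auto simp: long_unary_words_def simp flip: replicate_add)
    then show "w \<in> {} \<union> {f @ w | f w. f \<in> {replicate m 0} \<and> w \<in> lists {0}}"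
      by (auto simp: in_lists_conv_set)
  qed (auto simp: long_unary_words_def)
  then show ?thesis
    unfolding reverse_definite_def by (intro exI[of _ "{}"] exI[of _ "{replicate m 0}"]) auto
qed

lemma state_complexity_long_unary_words:
  assumes "m \<le> 1"
  shows "state_complexity {0} (long_unary_words m) = m + 1"
proof -
  let ?L = "long_unary_words m"
  have lquot_nonempty: "lquot w ?L = lists {0}" if "w \<in> lists {0}" "w \<noteq> []" for w
  proof -
    have "m \<le> length w" using that(2) assms by (cases w) auto
    with that(1) show ?thesis by (auto simp: long_unary_words_def lquot_def)
  qed
  have "quotients {0} ?L = {?L, lists {0}}"
  proof
    show "quotients {0} ?L \<subseteq> {?L, lists {0}}"
    proof
      fix X assume "X \<in> quotients {0} ?L"
      then obtain w where "w \<in> lists {0}" "X = lquot w ?L" by (auto simp: quotients_def)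
      then show "X \<in> {?L, lists {0}}" using lquot_nonempty by (cases "w = []") auto
    qed
    have "lquot [0] ?L \<in> quotients {0} ?L" by (rule lquot_in_quotients) simp
    then show "{?L, lists {0}} \<subseteq> quotients {0} ?L"
      using self_in_quotients lquot_nonempty[of "[0]"] by simp
  qed
  moreover have "?L = lists {0} \<longleftrightarrow> m = 0"
  proof
    assume "?L = lists {0}"
    then have "[] \<in> ?L" by simp
    then show "m = 0" by (simp add: long_unary_words_def)
  qed (auto simp: long_unary_words_def)
  ultimately have "card (quotients {0} ?L) = m + 1" "finite (quotients {0} ?L)"
    using assms by (auto simp: card_insert_if)
  moreover have "?L \<subseteq> lists {0}" by (auto simp: long_unary_words_def)
  ultimately show ?thesis by (simp add: state_complexity_eq_card_quotients)
qed

lemma syntactic_complexity_long_unary_words: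
  assumes "m \<le> 1"
  shows "syntactic_complexity {0} (long_unary_words m) = 1"
proof -
  let ?L = "long_unary_words m"
  have "(\<forall>u\<in>lists {0}. \<forall>v\<in>lists {0}. u @ x @ v \<in> ?L \<longleftrightarrow> u @ y @ v \<in> ?L) \<longleftrightarrow>
        (m \<le> length x) = (m \<le> length y)" if "x \<in> lists {0}" "y \<in> lists {0}" for x y
  proof
    assume "\<forall>u\<in>lists {0}. \<forall>v\<in>lists {0}. u @ x @ v \<in> ?L \<longleftrightarrow> u @ y @ v \<in> ?L"
    then have "[] @ x @ [] \<in> ?L \<longleftrightarrow> [] @ y @ [] \<in> ?L" by blast
    with that show "(m \<le> length x) = (m \<le> length y)" by (simp add: long_unary_words_def)
  next
    assume "(m \<le> length x) = (m \<le> length y)"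
    with that assms show "\<forall>u\<in>lists {0}. \<forall>v\<in>lists {0}. u @ x @ v \<in> ?L \<longleftrightarrow> u @ y @ v \<in> ?L"
      by (auto simp: long_unary_words_def)
  qed
  then have "syntactic_complexity {0} ?L = card ((\<lambda>x::nat list. m \<le> length x) ` (lists {0} - {[]}))"
    by (rule syntactic_complexity_eq_card_image)
  also have "(\<lambda>x::nat list. m \<le> length x) ` (lists {0} - {[]}) = {True}"
  proof -
    have "m \<le> length w" if "w \<noteq> []" for w :: "nat list"
      using that assms by (cases w) auto
    then show ?thesis by (auto intro!: image_eqI[of _ _ "[0]"])
  qed
  finally show ?thesis by simp
qed

lemma syntactic_complexity_bound_attained:
  assumes "1 \<le> n"
  shows "\<exists>(\<Sigma>::nat set) L. finite \<Sigma> \<and> \<Sigma> \<noteq> {} \<and> reverse_definite \<Sigma> L \<and>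
           state_complexity \<Sigma> L = n \<and> syntactic_complexity \<Sigma> L = fact (n - 1)"
proof (cases "n \<le> 2")
  case True
  then have m: "n - 1 \<le> 1" by simp
  have "n - 1 = 0 \<or> n - 1 = 1" "n - 1 + 1 = n"
    using True assms by auto
  then have "fact (n - 1) = (1::nat)" "n - 1 + 1 = n" by auto
  then show ?thesis
    using reverse_definite_long_unary_words state_complexity_long_unary_words[OF m]
      syntactic_complexity_long_unary_words[OF m]
    by (intro exI[of _ "{0}"] exI[of _ "long_unary_words (n - 1)"]) simp
next
  case False
  then show ?thesis
    using generated_language[of n "increasing_maps n"] card_increasing_maps[of n]
      finite_increasing_maps shift_reject_in_increasing_maps shift_accept_in_increasing_maps
    by auto
qed

lemma alphabet_bound_attained:
  assumes "4 \<le> n"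
  shows "\<exists>(\<Sigma>::nat set) L. finite \<Sigma> \<and> \<Sigma> \<noteq> {} \<and> reverse_definite \<Sigma> L \<and>
           card \<Sigma> = fact (n - 1) - 2 * fact (n - 2) \<and>
           state_complexity \<Sigma> L = n \<and> syntactic_complexity \<Sigma> L = fact (n - 1)"
proof -
  have "increasing_maps n \<subseteq> (increasing_maps n - two_step_maps n) \<union>
      products {0..<n} (increasing_maps n - two_step_maps n)"
    using two_step_maps_products[OF assms] by blast
  then show ?thesis
    using assms generated_language[of n "increasing_maps n - two_step_maps n"] shifts_not_two_step[OF assms]
      card_increasing_maps[of n] card_increasing_maps_minus_two_step[of n] finite_increasing_maps
    by auto
qed

theorem theorem3:
  shows
   "(\<forall>(\<Sigma>::'a set) L. finite \<Sigma> \<and> \<Sigma> \<noteq> {} \<and> reverse_definite \<Sigma> L \<longrightarrow>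
        syntactic_complexity \<Sigma> L \<le> fact (state_complexity \<Sigma> L - 1))
    \<and> (\<forall>n::nat. n \<ge> 1 \<longrightarrow> (\<exists>(\<Sigma>::nat set) L. finite \<Sigma> \<and> \<Sigma> \<noteq> {} \<and> reverse_definite \<Sigma> L \<and>
        state_complexity \<Sigma> L = n \<and> syntactic_complexity \<Sigma> L = fact (n - 1)))
    \<and> (\<forall>(\<Sigma>::'a set) L. finite \<Sigma> \<and> \<Sigma> \<noteq> {} \<and> reverse_definite \<Sigma> L \<and>
        state_complexity \<Sigma> L \<ge> 4 \<and>
        syntactic_complexity \<Sigma> L = fact (state_complexity \<Sigma> L - 1) \<longrightarrow>
        card \<Sigma> \<ge> fact (state_complexity \<Sigma> L - 1) - 2 * fact (state_complexity \<Sigma> L - 2))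
    \<and> (\<forall>n::nat. n \<ge> 4 \<longrightarrow> (\<exists>(\<Sigma>::nat set) L. finite \<Sigma> \<and> \<Sigma> \<noteq> {} \<and> reverse_definite \<Sigma> L \<and>
        card \<Sigma> = fact (n - 1) - 2 * fact (n - 2) \<and>
        state_complexity \<Sigma> L = n \<and> syntactic_complexity \<Sigma> L = fact (n - 1)))"
  using reverse_definite_syntactic_complexity_le reverse_definite_card_alphabet_ge
    syntactic_complexity_bound_attained alphabet_bound_attained
  by blast

end
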